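(* Let $n\ge 3$ and $\mathbf h\in\mathbb{R}^{\binom{n+1}{2}}$, decomposed as $\mathbf h=(\mathbf h_0,\mathbf h_1,\mathbf h_2)$. Assume $J_{n,2}\mathbf h\ge 0$ and $\mathbf h_2\not\ge 0$. Then $$P(\mathbf h_1)\ge 1,\quad R(J_{n-1,0}\mathbf h_0+\mathbf h_1)\ge 1,\quad R(J_{n-1,1}\mathbf h_1+\mathbf h_2)\ge 1.$$
   Context: For a real vector $\mathbf x$, $P(\mathbf x)$ is the number of positive components and $R(\mathbf x)$ the number of nonzero components; inequalities are componentwise, and $\mathbf x\not\ge 0$ means some component is negative. $J_{m,j}$ is the matrix, with respect to the left lexicographic bases of degree-$j$ and degree-$(j+1)$ monomials in $m$ variables, of multiplication by the sum of the variables ($J_{n,j}$ in $x_1,\dots,x_n$, $J_{n-1,j}$ in $x_2,\dots,x_n$). If $\mathbf h$ is the coordinate vector of the quadratic form $A(x)=x_1^2A_0+x_1A_1(x_2,\dots,x_n)+A_2(x_2,\dots,x_n)$ ($A_j$ homogeneous of degree $j$), then $\mathbf h_j$ is the coordinate vector of $A_j$ in the left lexicographic basis of degree-$j$ monomials in $x_2,\dots,x_n$. *)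

theory Defs
  imports Complex_Main
begin

text \<open>A coordinate vector w.r.t. the monomial basis is represented as a function from
  exponent vectors to reals; only its values on the basis monomials are its components.\<close>
definition monoms :: "nat \<Rightarrow> nat \<Rightarrow> (nat \<Rightarrow> nat) set" where
  "monoms m j = {a. (\<forall>i\<ge>m. a i = 0) \<and> (\<Sum>i<m. a i) = j}"

text \<open>J m j: multiplication of a degree-j form in m variables by the sum of the variables,
  giving the coefficient vector of the degree-(j+1) product.\<close>
definition Jmat :: "nat \<Rightarrow> nat \<Rightarrow> ((nat \<Rightarrow> nat) \<Rightarrow> real) \<Rightarrow> ((nat \<Rightarrow> nat) \<Rightarrow> real)" where
  "Jmat m j h = (\<lambda>b. \<Sum>i<m. if 0 < b i then h (b(i := b i - 1)) else 0)"

definition Pcount :: "(nat \<Rightarrow> nat) set \<Rightarrow> ((nat \<Rightarrow> nat) \<Rightarrow> real) \<Rightarrow> nat" where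
  "Pcount S v = card {a\<in>S. v a > 0}"

definition Rcount :: "(nat \<Rightarrow> nat) set \<Rightarrow> ((nat \<Rightarrow> nat) \<Rightarrow> real) \<Rightarrow> nat" where
  "Rcount S v = card {a\<in>S. v a \<noteq> 0}"

text \<open>For A(x) = x_1^2 A_0 + x_1 A_1(x_2..x_n) + A_2(x_2..x_n), hpart j h is the coefficient
  vector of A_j, a form of degree j in x_2..x_n (re-indexed as variables 0..n-2).\<close>
definition hpart :: "nat \<Rightarrow> ((nat \<Rightarrow> nat) \<Rightarrow> real) \<Rightarrow> ((nat \<Rightarrow> nat) \<Rightarrow> real)" where
  "hpart j h = (\<lambda>c. h (\<lambda>i. if i = 0 then 2 - j else c (i - 1)))"

end

theory Submission
  imports Defs
begin

text \<open>Pick a degree-2 monomial \<open>c\<close> in \<open>x\<^sub>2,\<dots>,x\<^sub>n\<close> with \<open>h\<^sub>2(c) < 0\<close>. The coefficient of \<open>x\<^sub>1c\<close> in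
  \<open>(x\<^sub>1+\<dots>+x\<^sub>n)A\<close> is \<open>h\<^sub>2(c) + (J\<^sub>n\<^sub>-\<^sub>1\<^sub>,\<^sub>1h\<^sub>1)(c)\<close>; being nonnegative, it forces some \<open>h\<^sub>1(x\<^sub>k) > 0\<close>.
  The coefficients of \<open>x\<^sub>1\<^sup>3\<close> and \<open>x\<^sub>k\<^sup>3\<close> show \<open>h\<^sub>0 \<ge> 0\<close> and \<open>h\<^sub>2(x\<^sub>k\<^sup>2) \<ge> 0\<close>, so the vectors
  \<open>J\<^sub>n\<^sub>-\<^sub>1\<^sub>,\<^sub>0h\<^sub>0 + h\<^sub>1\<close> and \<open>J\<^sub>n\<^sub>-\<^sub>1\<^sub>,\<^sub>1h\<^sub>1 + h\<^sub>2\<close> are positive at \<open>x\<^sub>k\<close> and \<open>x\<^sub>k\<^sup>2\<close> respectively.\<close>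

definition var_pow :: "nat \<Rightarrow> nat \<Rightarrow> nat \<Rightarrow> nat" where
  "var_pow k v = (\<lambda>i. if i = k then v else 0)"

lemma finite_monoms: "finite (monoms m j)"
proof -
  have "monoms m j \<subseteq> {a. \<forall>i. (i \<in> {..<m} \<longrightarrow> a i \<in> {..j}) \<and> (i \<notin> {..<m} \<longrightarrow> a i = 0)}"
  proof (intro subsetI CollectI allI conjI impI)
    fix a i assume a: "a \<in> monoms m j"
    then show "i \<notin> {..<m} \<Longrightarrow> a i = 0" by (simp add: monoms_def)
    assume "i \<in> {..<m}"
    then have "a i \<le> (\<Sum>i<m. a i)" by (intro member_le_sum) auto
    with a show "a i \<in> {..j}" by (simp add: monoms_def)
  qed
  then show ?thesis by (rule finite_subset) (intro finite_set_of_finite_funs; simp)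
qed

lemma one_le_Pcount: "a \<in> monoms m j \<Longrightarrow> v a > 0 \<Longrightarrow> 1 \<le> Pcount (monoms m j) v"
  unfolding Pcount_def using finite_monoms by (simp add: Suc_le_eq card_gt_0_iff) blast

lemma one_le_Rcount: "a \<in> monoms m j \<Longrightarrow> v a \<noteq> 0 \<Longrightarrow> 1 \<le> Rcount (monoms m j) v"
  unfolding Rcount_def using finite_monoms by (simp add: Suc_le_eq card_gt_0_iff) blast

lemma var_pow_in_monoms: "k < m \<Longrightarrow> var_pow k v \<in> monoms m v"
  by (auto simp: monoms_def var_pow_def)

lemma monoms_1E:
  assumes "d \<in> monoms m 1"
  obtains k where "k < m" "d = var_pow k 1"
proof -
  from assms have "(\<Sum>i<m. d i) = 1" and zero: "\<forall>i\<ge>m. d i = 0"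
    by (auto simp: monoms_def)
  then have "\<exists>k\<in>{..<m}. d k = 1 \<and> (\<forall>i\<in>{..<m}. k \<noteq> i \<longrightarrow> d i = 0)"
    by (simp only: sum_eq_1_iff finite_lessThan)
  then obtain k where "k < m" "d k = 1" and "\<forall>i<m. i \<noteq> k \<longrightarrow> d i = 0"
    by auto
  with zero have "d = var_pow k 1"
    by (intro ext) (metis var_pow_def not_less)
  with \<open>k < m\<close> show thesis by (rule that)
qed

lemma case_nat_in_monoms:
  assumes "c \<in> monoms m j"
  shows "case_nat e c \<in> monoms (Suc m) (e + j)"
proof -
  have "(\<Sum>i<Suc m. case_nat e c i) = e + (\<Sum>i<m. c i)"
    unfolding sum.lessThan_Suc_shift by simp
  moreover have "\<forall>i\<ge>Suc m. case_nat e c i = 0"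
    using assms by (auto simp: monoms_def split: nat.split)
  ultimately show ?thesis
    using assms by (simp add: monoms_def)
qed

lemma monoms_decrement:
  assumes "c \<in> monoms m (Suc j)" "i < m" "0 < c i"
  shows "c(i := c i - 1) \<in> monoms m j"
proof -
  have "(\<Sum>l<m. c l) = c i + (\<Sum>l\<in>{..<m} - {i}. c l)"
    and "(\<Sum>l<m. (c(i := c i - 1)) l) = (c i - 1) + (\<Sum>l\<in>{..<m} - {i}. c l)"
    using assms(2) by (simp_all add: sum.remove)
  with assms show ?thesis by (auto simp: monoms_def)
qed

lemma Jmat_var_pow: "k < m \<Longrightarrow> Jmat m j g (var_pow k (Suc v)) = g (var_pow k v)"
proof -
  assume "k < m"
  have "Jmat m j g (var_pow k (Suc v)) = (\<Sum>i<m. if i = k then g (var_pow k v) else 0)"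
    unfolding Jmat_def by (intro sum.cong) (auto simp: var_pow_def intro!: arg_cong[where f = g])
  with \<open>k < m\<close> show ?thesis by simp
qed

lemma Jmat_posE:
  assumes "Jmat m j g c > 0"
  obtains i where "i < m" "0 < c i" "g (c(i := c i - 1)) > 0"
proof -
  from assms obtain i where "i < m" "(if 0 < c i then g (c(i := c i - 1)) else 0) > 0"
    unfolding Jmat_def by (metis (no_types, lifting) lessThan_iff not_le sum_nonpos)
  then show thesis by (intro that) (auto split: if_splits)
qed

text \<open>\<open>case_nat e c\<close> is the monomial \<open>x\<^sub>1\<^sup>ec\<close>. The coefficient of \<open>x\<^sub>1\<^sup>e\<^sup>+\<^sup>1c\<close> in \<open>(x\<^sub>1+\<dots>+x\<^sub>m\<^sub>+\<^sub>1)A\<close> comes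
  from \<open>x\<^sub>1\<^sup>ec\<close> and from multiplying the \<open>x\<^sub>1\<^sup>e\<^sup>+\<^sup>1\<close>-part of \<open>A\<close> by \<open>x\<^sub>2+\<dots>+x\<^sub>m\<^sub>+\<^sub>1\<close>.
  \<open>Jmat\<close> ignores its degree argument, hence the unrelated \<open>j\<close> and \<open>j'\<close>.\<close>
lemma Jmat_case_nat_Suc:
  "Jmat (Suc m) j h (case_nat (Suc e) c)
     = h (case_nat e c) + Jmat m j' (\<lambda>c'. h (case_nat (Suc e) c')) c"
proof -
  have "Jmat (Suc m) j h (case_nat (Suc e) c) = h ((case_nat (Suc e) c)(0 := e))
      + (\<Sum>i<m. if 0 < c i then h ((case_nat (Suc e) c)(Suc i := c i - 1)) else 0)"
    unfolding Jmat_def sum.lessThan_Suc_shift by (simp cong: if_cong)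
  moreover have "(case_nat (Suc e) c)(0 := e) = case_nat e c"
    and "\<And>i. (case_nat (Suc e) c)(Suc i := c i - 1) = case_nat (Suc e) (c(i := c i - 1))"
    by (auto split: nat.split)
  ultimately show ?thesis
    unfolding Jmat_def by (simp only:)
qed

lemma hpart_eq: "hpart j h = (\<lambda>c. h (case_nat (2 - j) c))"
  unfolding hpart_def by (intro ext arg_cong[where f = h]) (simp split: nat.split)

lemma Jmat_nonneg_imp_var_pow_nonneg:
  assumes "\<forall>b\<in>monoms m (Suc j). Jmat m j h b \<ge> 0" "k < m"
  shows "h (var_pow k j) \<ge> 0"
  using assms(1) var_pow_in_monoms[OF assms(2), of "Suc j"] Jmat_var_pow[OF assms(2)] by metis

lemma case_nat_0_var_pow: "case_nat 0 (var_pow k v) = var_pow (Suc k) v"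
  by (auto simp: var_pow_def split: nat.split)

lemma case_nat_var_pow_0: "case_nat v (var_pow k 0) = var_pow 0 v"
  by (auto simp: var_pow_def split: nat.split)

lemma neg_hpart_2_imp_pos_hpart_1:
  assumes "\<forall>b\<in>monoms (Suc m) 3. Jmat (Suc m) 2 h b \<ge> 0"
    and c: "c \<in> monoms m 2" "hpart 2 h c < 0"
  obtains k where "k < m" "hpart 1 h (var_pow k 1) > 0"
proof -
  have "case_nat 1 c \<in> monoms (Suc m) 3"
    using case_nat_in_monoms[OF c(1), of 1] by (simp add: numeral_3_eq_3)
  then have "Jmat (Suc m) 2 h (case_nat 1 c) \<ge> 0" using assms(1) by blast
  moreover have "Jmat (Suc m) 2 h (case_nat 1 c) = hpart 2 h c + Jmat m 1 (hpart 1 h) c"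
    using Jmat_case_nat_Suc[of m 2 h 0 c 1] by (simp add: hpart_eq)
  ultimately have "Jmat m 1 (hpart 1 h) c > 0" using c(2) by linarith
  then obtain i where i: "i < m" "0 < c i" "hpart 1 h (c(i := c i - 1)) > 0"
    by (rule Jmat_posE)
  have "c(i := c i - 1) \<in> monoms m 1"
    using monoms_decrement[of c m 1, unfolded Suc_1] c(1) i by blast
  then obtain k where "k < m" and "c(i := c i - 1) = var_pow k 1"
    by (rule monoms_1E)
  with i show thesis by (intro that) simp_all
qed

theorem lemma4p1:
  fixes n :: nat and h :: "(nat \<Rightarrow> nat) \<Rightarrow> real"
  assumes "n \<ge> 3"
    and "\<forall>b\<in>monoms n 3. Jmat n 2 h b \<ge> 0"
    and "\<exists>c\<in>monoms (n - 1) 2. hpart 2 h c < 0"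
  shows "Pcount (monoms (n - 1) 1) (hpart 1 h) \<ge> 1
    \<and> Rcount (monoms (n - 1) 1) (\<lambda>c. Jmat (n - 1) 0 (hpart 0 h) c + hpart 1 h c) \<ge> 1
    \<and> Rcount (monoms (n - 1) 2) (\<lambda>c. Jmat (n - 1) 1 (hpart 1 h) c + hpart 2 h c) \<ge> 1"
proof -
  obtain m where n: "n = Suc m" using assms(1) by (cases n) auto
  obtain c where "c \<in> monoms m 2" "hpart 2 h c < 0" using assms(3) n by auto
  with assms(2) obtain k where k: "k < m" and h1: "hpart 1 h (var_pow k 1) > 0"
    unfolding n by (rule neg_hpart_2_imp_pos_hpart_1)
  have "\<forall>b\<in>monoms n (Suc 2). Jmat n 2 h b \<ge> 0"
    using assms(2) by (simp add: numeral_3_eq_3)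
  from Jmat_nonneg_imp_var_pow_nonneg[OF this]
  have "h (var_pow 0 2) \<ge> 0" "h (var_pow (Suc k) 2) \<ge> 0"
    using k n by simp_all
  moreover have "Jmat m 0 (hpart 0 h) (var_pow k 1) = h (var_pow 0 2)"
    using Jmat_var_pow[OF k, of 0 _ 0] by (simp add: hpart_eq case_nat_var_pow_0)
  moreover have "Jmat m 1 (hpart 1 h) (var_pow k 2) = hpart 1 h (var_pow k 1)"
    by (rule Jmat_var_pow[OF k, of 1 _ 1, unfolded Suc_1])
  moreover have "hpart 2 h (var_pow k 2) = h (var_pow (Suc k) 2)"
    by (simp add: hpart_eq case_nat_0_var_pow)
  ultimately have "Jmat m 0 (hpart 0 h) (var_pow k 1) + hpart 1 h (var_pow k 1) \<noteq> 0"
    and "Jmat m 1 (hpart 1 h) (var_pow k 2) + hpart 2 h (var_pow k 2) \<noteq> 0"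
    using h1 by linarith+
  with h1 show ?thesis
    unfolding n diff_Suc_1
    by (intro conjI one_le_Pcount[OF var_pow_in_monoms[OF k]] one_le_Rcount[OF var_pow_in_monoms[OF k]])
qed

end
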